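(* Let $n\ge1$ and let $\mathcal{S}(\vec u,\vec v,\vec a,\vec d)$ be the lexicographic-order specification over $n$ variables defined below. Then the set $\mathcal{S}(\vec x,\vec x,\vec a,\vec d)\cup\{\bar d_n\ge1\}$ (obtained by substituting $x_i$ for both $u_i$ and $v_i$) propagates to a conflict by unit propagation starting from the empty assignment, using $O(n)$ propagations. Consequently, the reflexivity proof obligation $\mathcal{S}(\vec x,\vec x,\vec a,\vec d)\vdash\{d_n\ge1\}$ for the order $\mathcal{O}(\vec d)=\{d_n\ge1\}$ can be proved by a single reverse unit propagation (RUP) step requiring $O(n)$ propagations.
   Context: Literals are $x$ or $\bar x=1-x$; a PB constraint is $\sum_i c_i\ell_i\ge A$ with $c_i,A\ge0$. The specification $\mathcal{S}(\vec u,\vec v,\vec a,\vec d)$ (variables $u_1..u_n$, $v_1..v_n$, $a_1..a_{n-1}$, $d_1..d_n$) consists of: $\bar a_1+u_1+\bar v_1\ge1$; $2a_1+\bar u_1+v_1\ge2$; for $1\le i\le n-2$: $3\bar a_{i+1}+2a_i+u_{i+1}+\bar v_{i+1}\ge3$ and $2a_{i+1}+2\bar a_i+\bar u_{i+1}+v_{i+1}\ge2$; $\bar d_1+v_1+\bar u_1\ge1$; $2d_1+\bar v_1+u_1\ge2$; for $1\le i\le n-1$: $4\bar d_{i+1}+3d_i+\bar a_i+v_{i+1}+\bar u_{i+1}\ge4$ and $4d_{i+1}+3\bar d_i+a_i+\bar v_{i+1}+u_{i+1}\ge3$. After substitution, a constraint is simplified by using $x+\bar x=1$. Unit propagation: for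 a partial assignment $\rho$, the slack of $\sum_i c_i\ell_i\ge A$ is $\sum_{i:\rho(\ell_i)\ne0}c_i-A$; if it is negative the constraint is in conflict; if an unassigned literal $\ell_i$ has $c_i$ greater than the slack, $\ell_i$ is propagated to $1$ (added to $\rho$). This is repeated until a conflict or no further propagation. A constraint $C$ is derived by RUP from $F$ if unit propagation on $F\cup\{\neg C\}$ from the empty assignment reaches a conflict, where $\neg(\sum c_i\ell_i\ge A)$ is $\sum c_i\bar\ell_i\ge\sum c_i-A+1$. *)

theory Defs
  imports Main
begin

datatype 'v lit = Pos 'v | Neg 'v

fun lit_var :: "'v lit \<Rightarrow> 'v" where
  "lit_var (Pos x) = x" | "lit_var (Neg x) = x"

fun lit_neg :: "'v lit \<Rightarrow> 'v lit" where
  "lit_neg (Pos x) = Neg x" | "lit_neg (Neg x) = Pos x"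

text \<open>A PB constraint sum_i c_i l_i >= A, as a list of (coefficient, literal) terms and a degree.\<close>
type_synonym 'v pb = "(int \<times> 'v lit) list \<times> int"

text \<open>Simplification using x + not x = 1 (and merging of equal literals).\<close>
definition pb_simp :: "'v pb \<Rightarrow> 'v pb" where
  "pb_simp C = (let ts = fst C; A = snd C;
      vs = remdups (map (lit_var \<circ> snd) ts);
      P = (\<lambda>x. sum_list (map fst (filter (\<lambda>t. snd t = Pos x) ts)));
      N = (\<lambda>x. sum_list (map fst (filter (\<lambda>t. snd t = Neg x) ts)));
      m = (\<lambda>x. min (P x) (N x))
    in (concat (map (\<lambda>x. filter (\<lambda>t. fst t \<noteq> 0)
                         [(P x - m x, Pos x), (N x - m x, Neg x)]) vs),
        A - sum_list (map m vs)))"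

definition pb_neg :: "'v pb \<Rightarrow> 'v pb" where
  "pb_neg C = (map (\<lambda>(c, l). (c, lit_neg l)) (fst C),
               sum_list (map fst (fst C)) - snd C + 1)"

type_synonym 'v assignment = "'v \<Rightarrow> bool option"

fun not_falsified :: "'v assignment \<Rightarrow> 'v lit \<Rightarrow> bool" where
  "not_falsified \<rho> (Pos x) = (\<rho> x \<noteq> Some False)"
| "not_falsified \<rho> (Neg x) = (\<rho> x \<noteq> Some True)"

fun assign_lit :: "'v assignment \<Rightarrow> 'v lit \<Rightarrow> 'v assignment" where
  "assign_lit \<rho> (Pos x) = \<rho>(x := Some True)"
| "assign_lit \<rho> (Neg x) = \<rho>(x := Some False)"

definition slack :: "'v assignment \<Rightarrow> 'v pb \<Rightarrow> int" where
  "slack \<rho> C = sum_list (map fst (filter (\<lambda>t. not_falsified \<rho> (snd t)) (fst C))) - snd C"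

definition in_conflict :: "'v assignment \<Rightarrow> 'v pb \<Rightarrow> bool" where
  "in_conflict \<rho> C \<longleftrightarrow> slack \<rho> C < 0"

definition up_step :: "'v pb list \<Rightarrow> 'v assignment \<Rightarrow> 'v assignment \<Rightarrow> bool" where
  "up_step F \<rho> \<rho>' \<longleftrightarrow>
     (\<forall>C\<in>set F. \<not> in_conflict \<rho> C) \<and>
     (\<exists>C\<in>set F. \<exists>t\<in>set (fst C). \<rho> (lit_var (snd t)) = None \<and>
        fst t > slack \<rho> C \<and> \<rho>' = assign_lit \<rho> (snd t))"

definition up_conflict_within :: "'v pb list \<Rightarrow> nat \<Rightarrow> bool" where
  "up_conflict_within F K \<longleftrightarrow>
     (\<forall>k \<rho>. (up_step F ^^ k) Map.empty \<rho> \<and> \<not> (\<exists>\<rho>'. up_step F \<rho> \<rho>') \<longrightarrow>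
        (\<exists>C\<in>set F. in_conflict \<rho> C) \<and> k \<le> K) \<and>
     (\<exists>k \<rho>. (up_step F ^^ k) Map.empty \<rho> \<and> (\<exists>C\<in>set F. in_conflict \<rho> C))"

definition rup_within :: "'v pb list \<Rightarrow> 'v pb \<Rightarrow> nat \<Rightarrow> bool" where
  "rup_within F C K \<longleftrightarrow> up_conflict_within (F @ [pb_neg C]) K"

definition lex_spec :: "(nat \<Rightarrow> 'v) \<Rightarrow> (nat \<Rightarrow> 'v) \<Rightarrow> (nat \<Rightarrow> 'v) \<Rightarrow> (nat \<Rightarrow> 'v) \<Rightarrow> nat \<Rightarrow> 'v pb list" where
  "lex_spec u v a d n =
     [ ([(1, Neg (a 1)), (1, Pos (u 1)), (1, Neg (v 1))], 1),
       ([(2, Pos (a 1)), (1, Neg (u 1)), (1, Pos (v 1))], 2) ]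
   @ concat (map (\<lambda>i.
       [ ([(3, Neg (a (i+1))), (2, Pos (a i)), (1, Pos (u (i+1))), (1, Neg (v (i+1)))], 3),
         ([(2, Pos (a (i+1))), (2, Neg (a i)), (1, Neg (u (i+1))), (1, Pos (v (i+1)))], 2) ])
       [1..<n-1])
   @ [ ([(1, Neg (d 1)), (1, Pos (v 1)), (1, Neg (u 1))], 1),
       ([(2, Pos (d 1)), (1, Neg (v 1)), (1, Pos (u 1))], 2) ]
   @ concat (map (\<lambda>i.
       [ ([(4, Neg (d (i+1))), (3, Pos (d i)), (1, Neg (a i)), (1, Pos (v (i+1))), (1, Neg (u (i+1)))], 4),
         ([(4, Pos (d (i+1))), (3, Neg (d i)), (1, Pos (a i)), (1, Neg (v (i+1))), (1, Pos (u (i+1)))], 3) ])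
       [1..<n])"

datatype var = X nat | A nat | D nat

end

theory Submission
  imports Defs
begin

(* Substituting x for both u and v makes the literals x_i and \bar x_i cancel, so the
  d-constraints of S(x,x,a,d) become 2 d_1 >= 1 and 4 d_(i+1) + 3 \bar d_i + a_i >= 2.
  Starting from the empty assignment they propagate d_1, ..., d_n in turn, after which
  \bar d_n >= 1 is falsified.  Since slack only decreases as an assignment grows, any
  propagation run that gets stuck without conflict would have to extend this trail as well,
  and hence be in conflict; every run has length at most the number of variables, 3(n+1). *)

lemma sum_list_filter_mono:
  fixes f :: "'a \<Rightarrow> 'b::ordered_comm_monoid_add"
  assumes "\<forall>x\<in>set xs. 0 \<le> f x" and "\<forall>x. Q x \<longrightarrow> P x"
  shows "sum_list (map f (filter Q xs)) \<le> sum_list (map f (filter P xs))"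
  using assms by (induct xs) (auto intro: add_mono add_increasing)

lemma sum_list_filter_mono_add:
  fixes f :: "'a \<Rightarrow> 'b::ordered_comm_monoid_add"
  assumes "\<forall>x\<in>set xs. 0 \<le> f x" and "\<forall>x. Q x \<longrightarrow> P x"
    and "y \<in> set xs" and "P y" and "\<not> Q y"
  shows "sum_list (map f (filter Q xs)) + f y \<le> sum_list (map f (filter P xs))"
  using assms
proof (induct xs)
  case (Cons x xs)
  show ?case
  proof (cases "x = y")
    case True
    then show ?thesis
      using Cons.prems sum_list_filter_mono[of xs f Q P] by (simp add: add.commute add_mono)
  next
    case False
    then show ?thesis using Cons by (auto intro: add_mono add_increasing simp: add.assoc)
  qed
qed simp

definition propagates :: "'v pb list \<Rightarrow> 'v assignment \<Rightarrow> 'v lit \<Rightarrow> bool" where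
  "propagates F \<rho> l \<longleftrightarrow> \<rho> (lit_var l) = None \<and>
     (\<exists>C\<in>set F. \<exists>t\<in>set (fst C). snd t = l \<and> fst t > slack \<rho> C)"

lemma propagatesI:
  "C \<in> set F \<Longrightarrow> (c, l) \<in> set (fst C) \<Longrightarrow> \<rho> (lit_var l) = None \<Longrightarrow> slack \<rho> C < c \<Longrightarrow>
   propagates F \<rho> l"
  unfolding propagates_def by force

lemma up_step_iff_propagates:
  "up_step F \<rho> \<rho>' \<longleftrightarrow>
     (\<forall>C\<in>set F. \<not> in_conflict \<rho> C) \<and> (\<exists>l. propagates F \<rho> l \<and> \<rho>' = assign_lit \<rho> l)"
  unfolding up_step_def propagates_def by blast

fun trail :: "(nat \<Rightarrow> 'v lit) \<Rightarrow> nat \<Rightarrow> 'v assignment" where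
  "trail l 0 = Map.empty"
| "trail l (Suc j) = assign_lit (trail l j) (l j)"

definition pb_vars :: "'v pb list \<Rightarrow> 'v set" where
  "pb_vars F = (\<Union>C\<in>set F. lit_var ` snd ` set (fst C))"

definition nonneg_coeffs :: "'v pb list \<Rightarrow> bool" where
  "nonneg_coeffs F \<longleftrightarrow> (\<forall>C\<in>set F. \<forall>t\<in>set (fst C). 0 \<le> fst t)"

lemma finite_pb_vars [simp]: "finite (pb_vars F)"
  by (simp add: pb_vars_def)

lemma pb_vars_append [simp]: "pb_vars (F @ G) = pb_vars F \<union> pb_vars G"
  by (simp add: pb_vars_def)

lemma not_falsified_antimono:
  "\<rho> \<subseteq>\<^sub>m \<rho>' \<Longrightarrow> not_falsified \<rho>' l \<Longrightarrow> not_falsified \<rho> l"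
  by (cases l) (auto simp: map_le_def dom_def)

lemma dom_assign_lit [simp]: "dom (assign_lit \<rho> l) = insert (lit_var l) (dom \<rho>)"
  by (cases l) auto

lemma slack_antimono:
  assumes "\<forall>t\<in>set (fst C). 0 \<le> fst t" and "\<rho> \<subseteq>\<^sub>m \<rho>'"
  shows "slack \<rho>' C \<le> slack \<rho> C"
  unfolding slack_def
  using sum_list_filter_mono[of "fst C" fst "\<lambda>t. not_falsified \<rho>' (snd t)" "\<lambda>t. not_falsified \<rho> (snd t)"]
    assms(1) not_falsified_antimono[OF assms(2)] by simp

lemma slack_falsify:
  assumes "\<forall>t\<in>set (fst C). 0 \<le> fst t" and "\<rho> \<subseteq>\<^sub>m \<rho>'" and "t \<in> set (fst C)"
    and "not_falsified \<rho> (snd t)" and "\<not> not_falsified \<rho>' (snd t)"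
  shows "slack \<rho>' C + fst t \<le> slack \<rho> C"
  unfolding slack_def
  using sum_list_filter_mono_add[of "fst C" fst "\<lambda>t. not_falsified \<rho>' (snd t)" "\<lambda>t. not_falsified \<rho> (snd t)" t]
    assms(1,3-) not_falsified_antimono[OF assms(2)] by simp

lemma up_steps_dom:
  "(up_step F ^^ k) Map.empty \<rho> \<Longrightarrow> finite (dom \<rho>) \<and> card (dom \<rho>) = k \<and> dom \<rho> \<subseteq> pb_vars F"
proof (induct k arbitrary: \<rho>)
  case (Suc k)
  then obtain \<rho>0 where run: "(up_step F ^^ k) Map.empty \<rho>0" and "up_step F \<rho>0 \<rho>"
    by auto
  then obtain l where step: "propagates F \<rho>0 l" and \<rho>: "\<rho> = assign_lit \<rho>0 l"
    by (auto simp: up_step_iff_propagates)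
  have "lit_var l \<notin> dom \<rho>0" and "lit_var l \<in> pb_vars F"
    using step by (auto simp: propagates_def pb_vars_def)
  with Suc.hyps[OF run] show ?case by (simp add: \<rho>)
qed simp

lemma up_steps_length_le: "(up_step F ^^ k) Map.empty \<rho> \<Longrightarrow> k \<le> card (pb_vars F)"
  using up_steps_dom card_mono[OF finite_pb_vars] by metis

lemma stuck_extends_propagation:
  assumes "nonneg_coeffs F" and "\<sigma> \<subseteq>\<^sub>m \<rho>" and "propagates F \<sigma> l"
    and no_conflict: "\<forall>C\<in>set F. \<not> in_conflict \<rho> C" and stuck: "\<nexists>\<rho>'. up_step F \<rho> \<rho>'"
  shows "assign_lit \<sigma> l \<subseteq>\<^sub>m \<rho>"
proof -
  obtain C t where C: "C \<in> set F" "t \<in> set (fst C)" "snd t = l" "fst t > slack \<sigma> C"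
    and unassigned: "\<sigma> (lit_var l) = None"
    using assms(3) by (auto simp: propagates_def)
  have nonneg: "\<forall>t\<in>set (fst C). 0 \<le> fst t" using assms(1) C(1) by (simp add: nonneg_coeffs_def)
  show ?thesis
  proof (cases "\<rho> (lit_var l)")
    case None
    have "slack \<rho> C < fst t" using slack_antimono[OF nonneg assms(2)] C(4) by linarith
    then have "propagates F \<rho> l" unfolding propagates_def using C None by blast
    then show ?thesis using stuck no_conflict by (auto simp: up_step_iff_propagates)
  next
    case (Some b)
    have "not_falsified \<rho> l"
    proof (rule ccontr)
      assume "\<not> not_falsified \<rho> l"
      then have "slack \<rho> C + fst t \<le> slack \<sigma> C"
        using slack_falsify[OF nonneg assms(2) C(2)] C(3) unassigned by (cases l) auto
      then show False using no_conflict C by (auto simp: in_conflict_def)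
    qed
    then show ?thesis using assms(2) Some by (cases l) (auto simp: map_le_def)
  qed
qed

lemma stuck_in_conflict:
  assumes "nonneg_coeffs F" and trail: "\<forall>j<m. propagates F (trail l j) (l j)"
    and conflict: "\<exists>C\<in>set F. in_conflict (trail l m) C" and stuck: "\<nexists>\<rho>'. up_step F \<rho> \<rho>'"
  shows "\<exists>C\<in>set F. in_conflict \<rho> C"
proof (rule ccontr)
  assume no_conflict: "\<not> ?thesis"
  have below: "trail l j \<subseteq>\<^sub>m \<rho>" if "j \<le> m" for j
    using that
  proof (induct j)
    case (Suc j)
    then show ?case
      using stuck_extends_propagation[OF assms(1) _ _ _ stuck] trail no_conflict by simp
  qed simp
  then have "slack \<rho> C \<le> slack (trail l m) C" if "C \<in> set F" for C
    using assms(1) that slack_antimono[OF _ below[OF order_refl]] by (simp add: nonneg_coeffs_def)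
  then show False using conflict no_conflict by (force simp: in_conflict_def)
qed

lemma trail_is_run:
  assumes "\<forall>j<m. propagates F (trail l j) (l j) \<and> (\<forall>C\<in>set F. \<not> in_conflict (trail l j) C)"
  shows "(up_step F ^^ m) Map.empty (trail l m)"
  using assms
proof (induct m)
  case (Suc m)
  then have "up_step F (trail l m) (trail l (Suc m))" by (auto simp: up_step_iff_propagates)
  with Suc show ?case by auto
qed simp

lemma up_conflict_within_by_trail:
  assumes "nonneg_coeffs F" and "card (pb_vars F) \<le> K"
    and trail: "\<forall>j<m. propagates F (trail l j) (l j)"
    and conflict: "\<exists>C\<in>set F. in_conflict (trail l m) C"
  shows "up_conflict_within F K"
proof -
  \<comment> \<open>up_step only fires from conflict-free assignments, so the trail is a run
    only up to its first conflict\<close>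
  define m0 where "m0 = (LEAST j. \<exists>C\<in>set F. in_conflict (trail l j) C)"
  have "\<exists>C\<in>set F. in_conflict (trail l m0) C" and "m0 \<le> m"
    unfolding m0_def using conflict by (auto intro: LeastI Least_le)
  moreover have "(up_step F ^^ m0) Map.empty (trail l m0)"
    using trail \<open>m0 \<le> m\<close> not_less_Least[where P = "\<lambda>j. \<exists>C\<in>set F. in_conflict (trail l j) C"]
    by (intro trail_is_run) (auto simp: m0_def)
  moreover have "(\<exists>C\<in>set F. in_conflict \<rho> C) \<and> k \<le> K"
    if "(up_step F ^^ k) Map.empty \<rho>" and "\<nexists>\<rho>'. up_step F \<rho> \<rho>'" for k \<rho>
    using stuck_in_conflict[OF assms(1) trail conflict that(2)] up_steps_length_le[OF that(1)] assms(2)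
    by simp
  ultimately show ?thesis unfolding up_conflict_within_def by blast
qed

lemma pb_simp_nonneg: "t \<in> set (fst (pb_simp C)) \<Longrightarrow> 0 \<le> fst t"
  unfolding pb_simp_def Let_def by (auto simp: min_def split: if_splits)

lemma pb_vars_map_pb_simp: "pb_vars (map pb_simp F) \<subseteq> pb_vars F"
  unfolding pb_vars_def pb_simp_def Let_def by (force split: if_splits)

lemma pb_vars_lex_spec:
  "n \<ge> 1 \<Longrightarrow> pb_vars (lex_spec X X A D n) \<subseteq> X ` {..n} \<union> A ` {..n} \<union> D ` {..n}"
  unfolding lex_spec_def pb_vars_def by auto

lemma card_pb_vars_reflexivity:
  assumes "n \<ge> 1"
  shows "card (pb_vars (map pb_simp (lex_spec X X A D n) @ [([(1, Neg (D n))], 1)])) \<le> 6 * n"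
proof -
  have "pb_vars (map pb_simp (lex_spec X X A D n) @ [([(1, Neg (D n))], 1)])
      \<subseteq> X ` {..n} \<union> A ` {..n} \<union> D ` {..n}"
    using pb_vars_map_pb_simp[of "lex_spec X X A D n"] pb_vars_lex_spec[OF assms] assms
    by (auto simp: pb_vars_def[of "[_]"])
  then have "card (pb_vars (map pb_simp (lex_spec X X A D n) @ [([(1, Neg (D n))], 1)]))
      \<le> card (X ` {..n} \<union> A ` {..n} \<union> D ` {..n})"
    by (intro card_mono) auto
  also have "\<dots> \<le> card (X ` {..n}) + card (A ` {..n}) + card (D ` {..n})"
    by (meson card_Un_le add_right_mono order_trans)
  also have "\<dots> = 3 * (n + 1)"
    by (simp add: card_image inj_on_def)
  finally show ?thesis using assms by simp
qed

lemma trail_D_Suc: "trail (\<lambda>j. Pos (D (Suc j))) j = (\<lambda>v. if v \<in> D ` {1..j} then Some True else None)"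
  by (induct j) (auto simp: fun_eq_iff)

lemma propagates_D_Suc:
  assumes "j < n"
  shows "propagates (map pb_simp (lex_spec X X A D n) @ F) (trail (\<lambda>j. Pos (D (Suc j))) j) (Pos (D (Suc j)))"
proof (cases "j = 0")
  case True
  let ?C = "([(2, Pos (D 1)), (1, Neg (X 1)), (1, Pos (X 1))], 2) :: var pb"
  have "?C \<in> set (lex_spec X X A D n)" unfolding lex_spec_def by simp
  then have "pb_simp ?C \<in> set (map pb_simp (lex_spec X X A D n) @ F)" by simp
  moreover have "pb_simp ?C = ([(2, Pos (D 1))], 1)" by (simp add: pb_simp_def)
  ultimately have "([(2, Pos (D 1))], 1) \<in> set (map pb_simp (lex_spec X X A D n) @ F)" by simp
  moreover have "slack (trail (\<lambda>j. Pos (D (Suc j))) j) ([(2, Pos (D 1))], 1) < 2"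
    using True by (simp add: slack_def)
  ultimately show ?thesis
    using True by (intro propagatesI[where c = 2]) auto
next
  case False
  let ?C = "([(4, Pos (D (j+1))), (3, Neg (D j)), (1, Pos (A j)), (1, Neg (X (j+1))), (1, Pos (X (j+1)))], 3) :: var pb"
  have "?C \<in> set (lex_spec X X A D n)" unfolding lex_spec_def using False assms by force
  then have "pb_simp ?C \<in> set (map pb_simp (lex_spec X X A D n) @ F)" by simp
  moreover have "pb_simp ?C = ([(4, Pos (D (Suc j))), (3, Neg (D j)), (1, Pos (A j))], 2)"
    by (simp add: pb_simp_def)
  ultimately have "([(4, Pos (D (Suc j))), (3, Neg (D j)), (1, Pos (A j))], 2)
      \<in> set (map pb_simp (lex_spec X X A D n) @ F)" by simp
  moreover have "slack (trail (\<lambda>j. Pos (D (Suc j))) j)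
      ([(4, Pos (D (Suc j))), (3, Neg (D j)), (1, Pos (A j))], 2) < 4"
    using False by (simp add: slack_def trail_D_Suc)
  ultimately show ?thesis
    by (intro propagatesI[where c = 4]) (auto simp: trail_D_Suc)
qed

lemma reflexivity_up_conflict:
  assumes "n \<ge> 1"
  shows "up_conflict_within (map pb_simp (lex_spec X X A D n) @ [([(1, Neg (D n))], 1)]) (6 * n)"
proof (rule up_conflict_within_by_trail)
  show "nonneg_coeffs (map pb_simp (lex_spec X X A D n) @ [([(1, Neg (D n))], 1)])"
    by (auto simp: nonneg_coeffs_def pb_simp_nonneg)
  show "\<forall>j<n. propagates (map pb_simp (lex_spec X X A D n) @ [([(1, Neg (D n))], 1)])
      (trail (\<lambda>j. Pos (D (Suc j))) j) (Pos (D (Suc j)))"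
    using propagates_D_Suc by blast
  show "\<exists>C\<in>set (map pb_simp (lex_spec X X A D n) @ [([(1, Neg (D n))], 1)]).
      in_conflict (trail (\<lambda>j. Pos (D (Suc j))) n) C"
    using assms by (auto simp: in_conflict_def slack_def trail_D_Suc)
qed (rule card_pb_vars_reflexivity[OF assms])

theorem lemma13:
  "\<exists>K::nat. \<forall>n::nat. n \<ge> 1 \<longrightarrow>
     up_conflict_within (map pb_simp (lex_spec X X A D n) @ [([(1, Neg (D n))], 1)]) (K * n) \<and>
     rup_within (map pb_simp (lex_spec X X A D n)) ([(1, Pos (D n))], 1) (K * n)"
proof (intro exI allI impI conjI)
  fix n :: nat
  assume "n \<ge> 1"
  then show conflict: "up_conflict_within (map pb_simp (lex_spec X X A D n) @ [([(1, Neg (D n))], 1)]) (6 * n)"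
    by (rule reflexivity_up_conflict)
  have "pb_neg ([(1, Pos (D n))], 1) = ([(1, Neg (D n))], 1)" by (simp add: pb_neg_def)
  then show "rup_within (map pb_simp (lex_spec X X A D n)) ([(1, Pos (D n))], 1) (6 * n)"
    unfolding rup_within_def using conflict by simp
qed

end
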